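(* Let $\mathcal A$ be a finite set, $\pi^{\mathrm{ref}}\in\Delta(\mathcal A)$ with full support, $\eta>0$, and let $Q^{(1)},Q^{(2)},\dots\in\mathbb R^{\mathcal A}$ satisfy $\|Q^{(t)}\|_\infty\le1$. Set $f^{(t)}(\pi)=\langle\pi,Q^{(t)}\rangle-\eta^{-1}\mathrm{KL}(\pi\|\pi^{\mathrm{ref}})$. Define $\pi^{(1)}=\pi^{\mathrm{ref}}$ and, for $t\ge1$, $$\pi^{(t+1)}(a)\propto\big(\pi^{\mathrm{ref}}(a)\big)^{1/t}\big(\pi^{(t)}(a)\big)^{(t-1)/t}\exp\!\big(\tfrac{\eta}{t}Q^{(t)}(a)\big).$$ Then for every $T\ge1$, $$\max_{\pi\in\Delta(\mathcal A)}\frac1T\sum_{t=1}^Tf^{(t)}(\pi)-\frac1T\sum_{t=1}^Tf^{(t)}(\pi^{(t)})\le\mathcal O\!\left(\frac{\eta(1+\log T)}{T}\right).$$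
   Context: $\mathrm{KL}(p\|q)=\sum_a p(a)\log(p(a)/q(a))$; $\langle\cdot,\cdot\rangle$ is the standard inner product on $\mathbb R^{\mathcal A}$; $\mathcal O$ hides an absolute constant. *)

theory Defs
  imports Complex_Main
begin

definition simplex :: "'a set \<Rightarrow> ('a \<Rightarrow> real) set" where
  "simplex A = {p. (\<forall>a\<in>A. 0 \<le> p a) \<and> (\<Sum>a\<in>A. p a) = 1}"

text \<open>KL divergence, with the convention 0 log 0 = 0 (automatic, since 0 * x = 0).\<close>
definition KL :: "'a set \<Rightarrow> ('a \<Rightarrow> real) \<Rightarrow> ('a \<Rightarrow> real) \<Rightarrow> real" where
  "KL A p q = (\<Sum>a\<in>A. p a * ln (p a / q a))"

definition inner_A :: "'a set \<Rightarrow> ('a \<Rightarrow> real) \<Rightarrow> ('a \<Rightarrow> real) \<Rightarrow> real" where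
  "inner_A A p v = (\<Sum>a\<in>A. p a * v a)"

definition obj :: "'a set \<Rightarrow> ('a \<Rightarrow> real) \<Rightarrow> real \<Rightarrow> ('a \<Rightarrow> real) \<Rightarrow> ('a \<Rightarrow> real) \<Rightarrow> real" where
  "obj A piref eta Qt p = inner_A A p Qt - KL A p piref / eta"

definition normalize :: "'a set \<Rightarrow> ('a \<Rightarrow> real) \<Rightarrow> ('a \<Rightarrow> real)" where
  "normalize A w = (\<lambda>a. w a / (\<Sum>b\<in>A. w b))"

text \<open>Iterates: pol (Suc 0) = pi_ref, and for t \<ge> 1,
  pol (t+1) a \<propto> piref a ^ (1/t) * pol t a ^ ((t-1)/t) * exp (eta/t * Q t a).
  Index 0 is unused.\<close>
primrec pol :: "'a set \<Rightarrow> ('a \<Rightarrow> real) \<Rightarrow> real \<Rightarrow> (nat \<Rightarrow> 'a \<Rightarrow> real) \<Rightarrow> nat \<Rightarrow> 'a \<Rightarrow> real" where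
  "pol A piref eta Q 0 = piref"
| "pol A piref eta Q (Suc t) =
     (if t = 0 then piref
      else normalize A (\<lambda>a. piref a powr (1 / real t)
                             * pol A piref eta Q t a powr ((real t - 1) / real t)
                             * exp (eta / real t * Q t a)))"

end

(* The iterates are follow-the-regularized-leader policies: pi^(t+1) is the Gibbs distribution
   proportional to pi_ref * exp (eta * m_t), where m_t is the mean of Q^(1), ..., Q^(t).
   The soft maximum Phi(m) = ln (sum_a pi_ref(a) exp (eta m(a))) / eta is, by the Gibbs variational
   principle, the maximum of <pi, m> - KL(pi || pi_ref) / eta, and f^(t) is affine in Q^(t), so every
   comparator pi satisfies sum_t f^(t)(pi) <= T Phi(m_T).  Conversely m_(t+1) - m_t has sup-norm at
   most 2 / (t+1), so Hoeffding's lemma gives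
     (t+1) Phi(m_(t+1)) - t Phi(m_t) <= f^(t+1)(pi^(t+1)) + 2 eta / (t+1).
   Telescoping bounds the regret by 2 eta H_T <= 2 eta (1 + ln T), so C = 2 works. *)

theory Submission
  imports Defs "HOL-Probability.Hoeffding" "HOL-Analysis.Harmonic_Numbers"
begin

(* HOL-Analysis's infix n-simplex predicate would otherwise capture "simplex A". *)
no_notation Polytope.simplex (infix \<open>simplex\<close> 50)
hide_const (open) Polytope.simplex

lemma Hoeffding_lemma_finite:
  fixes w x :: "'a \<Rightarrow> real"
  assumes "finite A" and w_nonneg: "\<forall>a\<in>A. 0 \<le> w a" and w_sum: "sum w A = 1"
    and x_bounds: "\<forall>a\<in>A. x a \<in> {lo..hi}" and "lo < hi"
  shows "(\<Sum>a\<in>A. w a * exp (x a)) \<le> exp ((\<Sum>a\<in>A. w a * x a) + (hi - lo)\<^sup>2 / 8)"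
proof -
  define h where "h = hi - lo"
  define \<mu> where "\<mu> = (\<Sum>a\<in>A. w a * x a)"
  define p where "p = (\<mu> - lo) / h"
  have "h > 0" using \<open>lo < hi\<close> by (simp add: h_def)
  have "(\<Sum>a\<in>A. w a * lo) \<le> \<mu>"
    unfolding \<mu>_def using w_nonneg x_bounds by (intro sum_mono mult_left_mono) auto
  then have "p \<ge> 0"
    using \<open>h > 0\<close> by (simp add: p_def flip: sum_distrib_right add: w_sum)
  define k where "k = (exp hi - exp lo) / h"
  have chord: "exp (x a) \<le> k * (x a - lo) + exp lo" if "a \<in> A" for a
    unfolding k_def h_def using that x_bounds
    by (intro convex_onD_Icc'[OF convex_on_subset[OF exp_convex]]) auto
  have "(\<Sum>a\<in>A. w a * exp (x a)) \<le> (\<Sum>a\<in>A. w a * (k * (x a - lo) + exp lo))"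
    using w_nonneg chord by (intro sum_mono mult_left_mono) auto
  also have "\<dots> = k * (\<mu> - lo) + exp lo"
    by (simp add: \<mu>_def algebra_simps sum.distrib sum_subtractf w_sum
        flip: sum_distrib_left sum_distrib_right)
  also have "\<dots> = exp lo * (1 + p * (exp h - 1))"
    using \<open>h > 0\<close> by (simp add: k_def p_def h_def field_simps exp_diff)
  also have "\<dots> \<le> exp lo * exp (h * p + h\<^sup>2 / 8)"
  proof -
    have "0 < 1 + p * (exp h - 1)"
      using \<open>p \<ge> 0\<close> \<open>h > 0\<close> by (intro add_pos_nonneg mult_nonneg_nonneg) auto
    moreover have "ln (1 + p * (exp h - 1)) \<le> h * p + h\<^sup>2 / 8"
      using Hoeffdings_lemma_aux[of h p] \<open>p \<ge> 0\<close> \<open>h > 0\<close> by simp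
    ultimately show ?thesis by (metis exp_le_cancel_iff exp_ln mult_left_mono exp_ge_zero)
  qed
  also have "\<dots> = exp (\<mu> + (hi - lo)\<^sup>2 / 8)"
    using \<open>h > 0\<close> by (simp add: p_def h_def flip: exp_add)
  finally show ?thesis unfolding \<mu>_def .
qed

lemma harm_le_one_plus_ln:
  assumes "1 \<le> n"
  shows "harm n \<le> 1 + ln (real n)"
proof -
  obtain k where "n = Suc k" using assms by (cases n) auto
  moreover have "harm (Suc k) - ln (real (Suc k)) \<le> harm (Suc 0) - ln (real (Suc 0))"
    using decseq_harm_diff_ln[unfolded decseq_def, rule_format, of 0 k] by simp
  ultimately show ?thesis by (simp add: harm_expand)
qed

lemma obj_cong: "(\<And>a. a \<in> A \<Longrightarrow> p a = p' a) \<Longrightarrow> obj A r eta q p = obj A r eta q p'"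
  by (simp add: obj_def inner_A_def KL_def)

locale kl_regularized =
  fixes A :: "'a set" and r :: "'a \<Rightarrow> real" and eta :: real
  assumes finite_A: "finite A" and r_simplex: "r \<in> simplex A"
    and r_pos: "\<And>a. a \<in> A \<Longrightarrow> 0 < r a" and eta_pos: "0 < eta"
begin

definition partition_function :: "('a \<Rightarrow> real) \<Rightarrow> real" where
  "partition_function v = (\<Sum>a\<in>A. r a * exp (eta * v a))"

definition soft_max :: "('a \<Rightarrow> real) \<Rightarrow> real" where
  "soft_max v = ln (partition_function v) / eta"

definition gibbs :: "('a \<Rightarrow> real) \<Rightarrow> 'a \<Rightarrow> real" where
  "gibbs v = (\<lambda>a. r a * exp (eta * v a) / partition_function v)"

lemma sum_r: "sum r A = 1"
  using r_simplex by (simp add: Defs.simplex_def)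

lemma partition_function_pos: "0 < partition_function v"
proof -
  have "A \<noteq> {}" using sum_r by auto
  then show ?thesis
    unfolding partition_function_def using finite_A r_pos by (intro sum_pos) auto
qed

lemma gibbs_pos: "a \<in> A \<Longrightarrow> 0 < gibbs v a"
  using partition_function_pos[of v] r_pos by (simp add: gibbs_def)

lemma sum_gibbs: "sum (gibbs v) A = 1"
  using partition_function_pos[of v] by (simp add: gibbs_def partition_function_def flip: sum_divide_distrib)

lemma ln_gibbs: "a \<in> A \<Longrightarrow> ln (gibbs v a) = ln (r a) + eta * v a - ln (partition_function v)"
  using partition_function_pos[of v] r_pos[of a] by (simp add: gibbs_def ln_div ln_mult)

lemma KL_gibbs: "KL A (gibbs v) r = eta * inner_A A (gibbs v) v - ln (partition_function v)"
proof -
  have "KL A (gibbs v) r = (\<Sum>a\<in>A. gibbs v a * (eta * v a) - gibbs v a * ln (partition_function v))"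
    unfolding KL_def
  proof (intro sum.cong refl)
    fix a assume "a \<in> A"
    then have "ln (gibbs v a / r a) = eta * v a - ln (partition_function v)"
      using gibbs_pos[of a v] r_pos[of a] by (simp add: ln_div ln_gibbs)
    then show "gibbs v a * ln (gibbs v a / r a) = gibbs v a * (eta * v a) - gibbs v a * ln (partition_function v)"
      by (simp add: right_diff_distrib)
  qed
  also have "\<dots> = eta * inner_A A (gibbs v) v - ln (partition_function v)"
    by (simp add: inner_A_def sum_subtractf sum_gibbs algebra_simps
        flip: sum_distrib_left sum_distrib_right)
  finally show ?thesis .
qed

lemma obj_gibbs:
  "obj A r eta q (gibbs v) = inner_A A (gibbs v) q - inner_A A (gibbs v) v + soft_max v"
  using eta_pos by (simp add: obj_def KL_gibbs soft_max_def diff_divide_distrib)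

text \<open>Gibbs variational principle; by obj_gibbs, equality holds at gibbs v.\<close>

lemma obj_le_soft_max:
  assumes "p \<in> simplex A"
  shows "obj A r eta v p \<le> soft_max v"
proof -
  have p_nonneg: "\<forall>a\<in>A. 0 \<le> p a" and sum_p: "sum p A = 1"
    using assms by (auto simp: Defs.simplex_def)
  have termwise: "p a * (eta * v a) - p a * ln (partition_function v) + p a - gibbs v a \<le> p a * ln (p a / r a)"
    if "a \<in> A" for a
  proof (cases "p a = 0")
    case True
    then show ?thesis using gibbs_pos[OF that, of v] by simp
  next
    case False
    then have "0 < p a" using p_nonneg that by force
    have "p a * ln (gibbs v a / p a) \<le> p a * (gibbs v a / p a - 1)"
      using \<open>0 < p a\<close> gibbs_pos[OF that, of v] by (intro mult_left_mono ln_le_minus_one) auto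
    also have "\<dots> = gibbs v a - p a"
      using \<open>0 < p a\<close> by (simp add: field_simps)
    finally have ln_le: "p a * ln (gibbs v a / p a) \<le> gibbs v a - p a" .
    have ln_ratio: "ln (gibbs v a / p a) = ln (r a) + eta * v a - ln (partition_function v) - ln (p a)"
      "ln (p a / r a) = ln (p a) - ln (r a)"
      using \<open>0 < p a\<close> gibbs_pos[OF that, of v] r_pos[OF that] that by (simp_all add: ln_div ln_gibbs)
    show ?thesis using ln_le unfolding ln_ratio by (simp add: algebra_simps)
  qed
  have "eta * inner_A A p v - ln (partition_function v) \<le> KL A p r"
    using sum_mono[OF termwise, of A id]
    by (simp add: KL_def inner_A_def sum_subtractf sum.distrib sum_p sum_gibbs algebra_simps
        flip: sum_distrib_left sum_distrib_right)
  then have "(eta * inner_A A p v - KL A p r) / eta \<le> ln (partition_function v) / eta"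
    using eta_pos by (intro divide_right_mono) auto
  then show ?thesis
    using eta_pos by (simp add: obj_def soft_max_def diff_divide_distrib)
qed

lemma partition_function_add:
  "partition_function (\<lambda>a. v a + d a) = partition_function v * (\<Sum>a\<in>A. gibbs v a * exp (eta * d a))"
  using partition_function_pos[of v]
  by (simp add: partition_function_def gibbs_def sum_distrib_left distrib_left exp_add mult.assoc)

lemma soft_max_add_le:
  assumes "0 < B" and d_bound: "\<forall>a\<in>A. \<bar>d a\<bar> \<le> B"
  shows "soft_max (\<lambda>a. v a + d a) \<le> soft_max v + inner_A A (gibbs v) d + eta * B\<^sup>2 / 2"
proof -
  define M where "M = (\<Sum>a\<in>A. gibbs v a * exp (eta * d a))"
  have "\<forall>a\<in>A. eta * d a \<in> {- (eta * B)..eta * B}"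
  proof
    fix a assume "a \<in> A"
    then have "\<bar>eta * d a\<bar> \<le> eta * B"
      using d_bound eta_pos by (simp add: abs_mult mult_left_mono)
    then show "eta * d a \<in> {- (eta * B)..eta * B}" by (simp add: abs_le_iff)
  qed
  then have "M \<le> exp ((\<Sum>a\<in>A. gibbs v a * (eta * d a)) + (eta * B - - (eta * B))\<^sup>2 / 8)"
    unfolding M_def using finite_A gibbs_pos sum_gibbs eta_pos \<open>0 < B\<close>
    by (intro Hoeffding_lemma_finite) (auto intro: less_imp_le)
  also have "\<dots> = exp (eta * inner_A A (gibbs v) d + eta\<^sup>2 * B\<^sup>2 / 2)"
    by (simp add: inner_A_def sum_distrib_left power2_eq_square algebra_simps)
  finally have "M \<le> exp (eta * inner_A A (gibbs v) d + eta\<^sup>2 * B\<^sup>2 / 2)" .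
  moreover have "0 < M"
    using partition_function_pos[of "\<lambda>a. v a + d a"] partition_function_pos[of v]
      partition_function_add[of v d]
    by (metis zero_less_mult_pos M_def)
  ultimately have ln_M: "ln M \<le> eta * inner_A A (gibbs v) d + eta\<^sup>2 * B\<^sup>2 / 2"
    by (metis ln_exp ln_le_cancel_iff exp_gt_zero)
  have "soft_max (\<lambda>a. v a + d a) = soft_max v + ln M / eta"
    using partition_function_pos[of v] \<open>0 < M\<close>
    by (simp add: soft_max_def partition_function_add M_def ln_mult add_divide_distrib)
  also have "ln M / eta \<le> (eta * inner_A A (gibbs v) d + eta\<^sup>2 * B\<^sup>2 / 2) / eta"
    using ln_M eta_pos by (intro divide_right_mono) auto
  also have "\<dots> = inner_A A (gibbs v) d + eta * B\<^sup>2 / 2"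
    using eta_pos by (simp add: power2_eq_square field_simps)
  finally show ?thesis by simp
qed

lemma gibbs_powr_mix:
  assumes "a \<in> A" and "0 \<le> s"
  shows "r a powr (1 / (s + 1)) * gibbs v a powr (s / (s + 1)) * exp (eta / (s + 1) * q)
    = exp (- s / (s + 1) * ln (partition_function v)) * (r a * exp (eta * ((s * v a + q) / (s + 1))))"
proof -
  have "r a powr (1 / (s + 1)) * gibbs v a powr (s / (s + 1)) * exp (eta / (s + 1) * q)
      = exp (ln (r a) / (s + 1) + s / (s + 1) * (ln (r a) + eta * v a - ln (partition_function v))
          + eta / (s + 1) * q)"
    using r_pos[OF assms(1)] gibbs_pos[OF assms(1), of v]
    by (simp add: powr_def ln_gibbs[OF assms(1)] exp_add)
  also have "ln (r a) / (s + 1) + s / (s + 1) * (ln (r a) + eta * v a - ln (partition_function v))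
      + eta / (s + 1) * q
      = - s / (s + 1) * ln (partition_function v) + ln (r a) + eta * ((s * v a + q) / (s + 1))"
    using \<open>0 \<le> s\<close> by (simp add: divide_simps) (simp add: algebra_simps)
  finally show ?thesis
    using r_pos[OF assms(1)] by (simp only: exp_add exp_ln mult_ac)
qed

lemma normalize_eq_gibbs:
  assumes "c \<noteq> 0" and "\<And>b. b \<in> A \<Longrightarrow> w b = c * (r b * exp (eta * v b))" and "a \<in> A"
  shows "normalize A w a = gibbs v a"
proof -
  have "sum w A = c * partition_function v"
    by (simp add: assms(2) partition_function_def sum_distrib_left)
  then show ?thesis
    using assms by (simp add: normalize_def gibbs_def)
qed

end

locale kl_regularized_ftrl = kl_regularized +
  fixes Q :: "nat \<Rightarrow> 'a \<Rightarrow> real"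
  assumes Q_bound: "\<And>t a. 1 \<le> t \<Longrightarrow> a \<in> A \<Longrightarrow> \<bar>Q t a\<bar> \<le> 1"
begin

text \<open>Note that mean_reward 0 = 0, as x / 0 = 0; this makes gibbs (mean_reward 0) = r.\<close>

definition mean_reward :: "nat \<Rightarrow> 'a \<Rightarrow> real" where
  "mean_reward t = (\<lambda>a. (\<Sum>s=1..t. Q s a) / real t)"

lemma mult_mean_reward: "real t * mean_reward t a = (\<Sum>s=1..t. Q s a)"
  by (cases "t = 0") (simp_all add: mean_reward_def)

lemma mean_reward_Suc:
  "real (Suc t) * mean_reward (Suc t) a = real t * mean_reward t a + Q (Suc t) a"
  unfolding mult_mean_reward by simp

lemma abs_mean_reward_le: "a \<in> A \<Longrightarrow> \<bar>mean_reward t a\<bar> \<le> 1"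
proof -
  assume "a \<in> A"
  have "\<bar>\<Sum>s=1..t. Q s a\<bar> \<le> (\<Sum>s=1..t. \<bar>Q s a\<bar>)"
    by (rule sum_abs)
  also have "\<dots> \<le> (\<Sum>s=1..t. 1)"
    using Q_bound \<open>a \<in> A\<close> by (intro sum_mono) auto
  finally have "\<bar>\<Sum>s=1..t. Q s a\<bar> \<le> real t" by simp
  then show ?thesis
    by (cases "t = 0") (simp_all add: mean_reward_def abs_div)
qed

lemma pol_Suc_eq_gibbs: "a \<in> A \<Longrightarrow> pol A r eta Q (Suc t) a = gibbs (mean_reward t) a"
proof (induction t arbitrary: a)
  case 0
  have "partition_function (mean_reward 0) = 1"
    by (simp add: partition_function_def mean_reward_def sum_r)
  then show ?case by (simp add: gibbs_def mean_reward_def)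
next
  case (Suc t)
  define c where "c = exp (- real t / (real t + 1) * ln (partition_function (mean_reward t)))"
  have "pol A r eta Q (Suc (Suc t)) a = normalize A (\<lambda>b. r b powr (1 / real (Suc t))
      * pol A r eta Q (Suc t) b powr ((real (Suc t) - 1) / real (Suc t))
      * exp (eta / real (Suc t) * Q (Suc t) b)) a"
    by simp
  also have "\<dots> = gibbs (mean_reward (Suc t)) a"
  proof (rule normalize_eq_gibbs)
    fix b assume "b \<in> A"
    have "real (Suc t) = real t + 1" and "real (Suc t) - 1 = real t"
      by simp_all
    moreover have "(real t * mean_reward t b + Q (Suc t) b) / (real t + 1) = mean_reward (Suc t) b"
      using mean_reward_Suc[of t b] by (simp add: field_simps)
    ultimately show "r b powr (1 / real (Suc t)) * pol A r eta Q (Suc t) b powr ((real (Suc t) - 1) / real (Suc t))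
        * exp (eta / real (Suc t) * Q (Suc t) b) = c * (r b * exp (eta * mean_reward (Suc t) b))"
      using gibbs_powr_mix[OF \<open>b \<in> A\<close> of_nat_0_le_iff, where v = "mean_reward t" and q = "Q (Suc t) b"]
      unfolding Suc.IH[OF \<open>b \<in> A\<close>] c_def by (simp only:)
  qed (simp_all add: c_def Suc.prems)
  finally show ?case .
qed

lemma obj_pol_Suc:
  "obj A r eta q (pol A r eta Q (Suc t)) = inner_A A (gibbs (mean_reward t)) q
     - inner_A A (gibbs (mean_reward t)) (mean_reward t) + soft_max (mean_reward t)"
  by (rule trans[OF obj_cong[OF pol_Suc_eq_gibbs] obj_gibbs])

lemma soft_max_mean_reward_Suc_le:
  "real (Suc t) * soft_max (mean_reward (Suc t))
     \<le> real t * soft_max (mean_reward t) + obj A r eta (Q (Suc t)) (pol A r eta Q (Suc t))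
       + 2 * eta / real (Suc t)"
proof -
  define N where "N = real (Suc t)"
  define m where "m = mean_reward t"
  define d where "d = (\<lambda>a. mean_reward (Suc t) a - m a)"
  have "0 < N" by (simp add: N_def)
  have N_d: "N * d a = Q (Suc t) a - m a" for a
    using mean_reward_Suc[of t a] by (simp add: N_def d_def m_def algebra_simps)
  have "\<forall>a\<in>A. \<bar>d a\<bar> \<le> 2 / N"
  proof
    fix a assume "a \<in> A"
    then have "\<bar>N * d a\<bar> \<le> 2"
      unfolding N_d using Q_bound[of "Suc t" a] abs_mean_reward_le[of a t] by (simp add: m_def)
    then show "\<bar>d a\<bar> \<le> 2 / N"
      using \<open>0 < N\<close> by (simp add: abs_mult pos_le_divide_eq mult.commute)
  qed
  then have "soft_max (mean_reward (Suc t)) \<le> soft_max m + inner_A A (gibbs m) d + eta * (2 / N)\<^sup>2 / 2"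
    using soft_max_add_le[of "2 / N" d m] \<open>0 < N\<close> by (simp add: d_def)
  then have "N * soft_max (mean_reward (Suc t))
      \<le> N * (soft_max m + inner_A A (gibbs m) d + eta * (2 / N)\<^sup>2 / 2)"
    using \<open>0 < N\<close> by (simp add: mult_left_mono)
  also have "\<dots> = N * soft_max m + inner_A A (gibbs m) (\<lambda>a. N * d a) + 2 * eta / N"
    using \<open>0 < N\<close> by (simp add: inner_A_def sum_distrib_left power2_eq_square field_simps)
  also have "inner_A A (gibbs m) (\<lambda>a. N * d a) = inner_A A (gibbs m) (Q (Suc t)) - inner_A A (gibbs m) m"
    by (simp add: N_d inner_A_def sum_subtractf right_diff_distrib)
  also have "N * soft_max m = real t * soft_max m + soft_max m"
    by (simp add: N_def algebra_simps)
  finally show ?thesis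
    using obj_pol_Suc[of "Q (Suc t)" t] by (simp add: N_def m_def)
qed

lemma soft_max_mean_reward_le_sum_obj_pol:
  "real T * soft_max (mean_reward T) \<le> (\<Sum>t=1..T. obj A r eta (Q t) (pol A r eta Q t)) + 2 * eta * harm T"
proof (induction T)
  case 0
  then show ?case by (simp add: harm_expand)
next
  case (Suc T)
  have "2 * eta * harm (Suc T) = 2 * eta * harm T + 2 * eta / real (Suc T)"
    by (simp add: harm_Suc algebra_simps divide_inverse)
  then show ?case
    using Suc.IH soft_max_mean_reward_Suc_le[of T] by (simp only: sum.cl_ivl_Suc) simp
qed

lemma sum_obj_eq: "(\<Sum>t=1..T. obj A r eta (Q t) p) = real T * obj A r eta (mean_reward T) p"
proof -
  have "(\<Sum>t=1..T. inner_A A p (Q t)) = (\<Sum>a\<in>A. p a * (\<Sum>t=1..T. Q t a))"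
    unfolding inner_A_def sum_distrib_left by (rule sum.swap)
  also have "\<dots> = (\<Sum>a\<in>A. p a * (real T * mean_reward T a))"
    by (simp only: mult_mean_reward)
  also have "\<dots> = real T * inner_A A p (mean_reward T)"
    by (simp add: inner_A_def sum_distrib_left mult_ac)
  finally show ?thesis
    by (simp add: obj_def sum_subtractf algebra_simps)
qed

theorem regret_le_harm:
  assumes "p \<in> simplex A"
  shows "(\<Sum>t=1..T. obj A r eta (Q t) p) - (\<Sum>t=1..T. obj A r eta (Q t) (pol A r eta Q t))
    \<le> 2 * eta * harm T"
proof -
  have "(\<Sum>t=1..T. obj A r eta (Q t) p) \<le> real T * soft_max (mean_reward T)"
    unfolding sum_obj_eq using obj_le_soft_max[OF assms] by (simp add: mult_left_mono)
  then show ?thesis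
    using soft_max_mean_reward_le_sum_obj_pol[of T] by simp
qed

end

theorem mainTheorem8:
  "\<exists>C::real. \<forall>(A::'a set) (piref::'a \<Rightarrow> real) (eta::real) (Q::nat \<Rightarrow> 'a \<Rightarrow> real) (T::nat).
     finite A \<longrightarrow> piref \<in> simplex A \<longrightarrow> (\<forall>a\<in>A. 0 < piref a) \<longrightarrow> 0 < eta \<longrightarrow>
     (\<forall>t\<ge>1. \<forall>a\<in>A. \<bar>Q t a\<bar> \<le> 1) \<longrightarrow> 1 \<le> T \<longrightarrow>
     (\<forall>p\<in>simplex A.
        (\<Sum>t=1..T. obj A piref eta (Q t) p) / real T
        - (\<Sum>t=1..T. obj A piref eta (Q t) (pol A piref eta Q t)) / real T
        \<le> C * (eta * (1 + ln (real T)) / real T))"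
proof (intro exI[of _ 2] allI impI ballI)
  fix A :: "'a set" and piref :: "'a \<Rightarrow> real" and eta :: real and Q :: "nat \<Rightarrow> 'a \<Rightarrow> real"
    and T :: nat and p :: "'a \<Rightarrow> real"
  assume "finite A" "piref \<in> simplex A" "\<forall>a\<in>A. 0 < piref a" "0 < eta"
    "\<forall>t\<ge>1. \<forall>a\<in>A. \<bar>Q t a\<bar> \<le> 1" "1 \<le> T" "p \<in> simplex A"
  then interpret kl_regularized_ftrl A piref eta Q
    by unfold_locales auto
  have "(\<Sum>t=1..T. obj A piref eta (Q t) p) - (\<Sum>t=1..T. obj A piref eta (Q t) (pol A piref eta Q t))
      \<le> 2 * eta * harm T"
    using regret_le_harm[OF \<open>p \<in> simplex A\<close>] .
  also have "\<dots> \<le> 2 * eta * (1 + ln (real T))"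
    using harm_le_one_plus_ln[OF \<open>1 \<le> T\<close>] \<open>0 < eta\<close> by simp
  finally have "((\<Sum>t=1..T. obj A piref eta (Q t) p)
      - (\<Sum>t=1..T. obj A piref eta (Q t) (pol A piref eta Q t))) / real T
      \<le> 2 * eta * (1 + ln (real T)) / real T"
    by (rule divide_right_mono) simp
  then show "(\<Sum>t=1..T. obj A piref eta (Q t) p) / real T
      - (\<Sum>t=1..T. obj A piref eta (Q t) (pol A piref eta Q t)) / real T
      \<le> 2 * (eta * (1 + ln (real T)) / real T)"
    by (simp add: diff_divide_distrib)
qed

end
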